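(* Let $n\ge1$ and let $f_1,\ldots,f_n$ be Alpert multiwavelets of multiplicity $n$. Then there is a real constant $c_{n,0}$ with $c_{n,0}^{-2}=2\int_0^1 p_{n-1}(x)^2\,dx$ such that $f_n(x)=c_{n,0}\,p_{n-1}(x)$ for $x\in(0,1)$. If moreover $n\ge2$, there is a real constant $d_{n,0}$ with $d_{n,0}^{-2}=2\int_0^1 q_{n-1}(x)^2\,dx$ such that $f_{n-1}(x)=d_{n,0}\,q_{n-1}(x)$ for $x\in(0,1)$.
   Context: Alpert multiwavelets of multiplicity $n\in\mathbb{N}$: real functions $f_1,\ldots,f_n$ supported on $[-1,1]$ such that (i) the restriction of each $f_i$ to $(0,1)$ is a polynomial of degree at most $n-1$; (ii) $f_k(-t)=(-1)^{k+n-1}f_k(t)$ for $t\in(0,1)$; (iii) $\int_{-1}^1 f_i(t)f_j(t)\,dt=\delta_{i,j}$ for $1\le i,j\le n$; (iv) $\int_{-1}^1 f_k(t)t^i\,dt=0$ for $i=0,1,\ldots,k+n-2$. Pochhammer symbol: $(a)_0=1$, $(a)_n=a(a+1)\cdots(a+n-1)$; for real $a$ and integer $n\ge0$, $\binom{n+a}{n}:=\frac{(a+1)_n}{n!}$. Define $p_n(x)=\sum_{k=0}^n\binom nk\binom{n+\frac k2}{n}(-1)^{n-k}x^k$ and $q_n(x)=\sum_{k=0}^n\binom nk\binom{n+\frac{k-1}2}{n}(-1)^{n-k}x^k$. *)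

theory Defs
  imports "HOL-Analysis.Analysis" "HOL-Computational_Algebra.Polynomial"
begin

text \<open>Generalized binomial: binom(n+a, n) := (a+1)_n / n!.\<close>
definition gbinom :: "nat \<Rightarrow> real \<Rightarrow> real" where
  "gbinom n a = pochhammer (a + 1) n / fact n"

definition pA :: "nat \<Rightarrow> real \<Rightarrow> real" where
  "pA n x = (\<Sum>k=0..n. real (n choose k) * gbinom n (real k / 2) * (-1) ^ (n - k) * x ^ k)"

definition qA :: "nat \<Rightarrow> real \<Rightarrow> real" where
  "qA n x = (\<Sum>k=0..n. real (n choose k) * gbinom n ((real k - 1) / 2) * (-1) ^ (n - k) * x ^ k)"

definition alpert_multiwavelets :: "nat \<Rightarrow> (nat \<Rightarrow> real \<Rightarrow> real) \<Rightarrow> bool" where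
  "alpert_multiwavelets n f \<longleftrightarrow>
     (\<forall>i\<in>{1..n}. \<forall>t. t \<notin> {-1..1} \<longrightarrow> f i t = 0) \<and>
     (\<forall>i\<in>{1..n}. \<exists>P :: real poly. degree P \<le> n - 1 \<and> (\<forall>t\<in>{0<..<1}. f i t = poly P t)) \<and>
     (\<forall>k\<in>{1..n}. \<forall>t\<in>{0<..<1}. f k (-t) = (-1) ^ (k + n - 1) * f k t) \<and>
     (\<forall>i\<in>{1..n}. \<forall>j\<in>{1..n}.
        integral {-1..1} (\<lambda>t. f i t * f j t) = (if i = j then 1 else 0)) \<and>
     (\<forall>k\<in>{1..n}. \<forall>i\<le>k + n - 2. integral {-1..1} (\<lambda>t. f k t * t ^ i) = 0)"

end

theory Submission
  imports Defs
begin

text \<open>On \<open>(0,1)\<close> the wavelet \<open>f n\<close> is a polynomial of degree \<open>\<le> n - 1\<close> and is odd, so its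
  vanishing moments on \<open>[-1,1]\<close> say that it is orthogonal on \<open>[0,1]\<close> to \<open>t ^ (1 + 2j)\<close> for
  \<open>j < n - 1\<close>; likewise the even \<open>f (n - 1)\<close> is orthogonal to \<open>t ^ 2j\<close>.  These \<open>d = n - 1\<close>
  conditions determine a polynomial of degree \<open>\<le> d\<close> up to a scalar: a nonzero \<open>R\<close> of degree
  \<open>< d\<close> orthogonal to all \<open>t ^ (m + 2j)\<close>, \<open>j < d\<close>, is also orthogonal to \<open>t ^ m * H(t\<^sup>2)\<close>
  for an \<open>H\<close> of degree \<open>< d\<close> chosen so that \<open>R(t) H(t\<^sup>2) \<ge> 0\<close> on \<open>(0,1)\<close>, which is absurd.
  The polynomials \<open>p d\<close> and \<open>q d\<close> satisfy the same conditions, because each of their moments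
  is a \<open>d\<close>-th finite difference of a polynomial of degree \<open>d - 1\<close>, and they do not vanish at
  \<open>0\<close>; the constant is then fixed by the normalization.\<close>

lemma alternating_binomial_sum_Suc:
  fixes g :: "nat \<Rightarrow> real"
  shows "(\<Sum>k\<le>Suc N. real (Suc N choose k) * (-1)^(Suc N - k) * g k) =
         (\<Sum>k\<le>N. real (N choose k) * (-1)^(N - k) * (g (Suc k) - g k))"
proof -
  have shifted: "(\<Sum>k\<le>Suc N. real (N choose k) * (-1)^(Suc N - k) * g k) =
     (-1)^(Suc N) * g 0 + (\<Sum>i\<le>N. real (N choose Suc i) * (-1)^(N - i) * g (Suc i))"
    by (subst sum.atMost_Suc_shift) simp
  have negated: "(\<Sum>k\<le>Suc N. real (N choose k) * (-1)^(Suc N - k) * g k) =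
     (\<Sum>k\<le>N. - (real (N choose k) * (-1)^(N - k) * g k))"
    by (simp add: Suc_diff_le)
  have pascal: "(\<Sum>k\<le>Suc N. real (Suc N choose k) * (-1)^(Suc N - k) * g k) =
     (-1)^(Suc N) * g 0 + (\<Sum>i\<le>N. real (N choose i) * (-1)^(N - i) * g (Suc i))
       + (\<Sum>i\<le>N. real (N choose Suc i) * (-1)^(N - i) * g (Suc i))"
    by (subst sum.atMost_Suc_shift) (simp add: sum.distrib algebra_simps)
  show ?thesis
    using shifted negated pascal by (simp add: sum.distrib sum_subtractf algebra_simps sum_negf)
qed

lemma alternating_binomial_sum_power_eq_0:
  "m < N \<Longrightarrow> (\<Sum>k\<le>N. real (N choose k) * (-1)^(N - k) * real k ^ m) = 0"
proof (induction N arbitrary: m)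
  case 0
  then show ?case by simp
next
  case (Suc N)
  have difference: "(1 + real k) ^ m - real k ^ m = (\<Sum>i<m. real (m choose i) * real k ^ i)" for k
  proof -
    have "(1 + real k) ^ m = (\<Sum>i\<le>m. real (m choose i) * real k ^ i)"
      by (subst add.commute, subst binomial_ring) simp
    then show ?thesis by (simp add: lessThan_Suc_atMost[symmetric])
  qed
  have "(\<Sum>k\<le>Suc N. real (Suc N choose k) * (-1)^(Suc N - k) * real k ^ m)
      = (\<Sum>k\<le>N. real (N choose k) * (-1)^(N - k) * (\<Sum>i<m. real (m choose i) * real k ^ i))"
    by (subst alternating_binomial_sum_Suc) (simp add: difference)
  also have "\<dots> = (\<Sum>i<m. real (m choose i) * (\<Sum>k\<le>N. real (N choose k) * (-1)^(N - k) * real k ^ i))"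
    by (simp add: sum_distrib_left sum_distrib_right mult_ac sum.swap[of _ "{..<m}"])
  also have "\<dots> = 0"
    using Suc by (intro sum.neutral) auto
  finally show ?case .
qed

lemma alternating_binomial_sum_poly_eq_0:
  fixes p :: "real poly"
  assumes "degree p < N"
  shows "(\<Sum>k\<le>N. real (N choose k) * (-1)^(N - k) * poly p (real k)) = 0"
proof -
  have "(\<Sum>k\<le>N. real (N choose k) * (-1)^(N - k) * poly p (real k)) =
        (\<Sum>i\<le>degree p. coeff p i * (\<Sum>k\<le>N. real (N choose k) * (-1)^(N - k) * real k ^ i))"
    by (simp add: poly_altdef sum_distrib_left sum_distrib_right mult_ac sum.swap[of _ "{..degree p}"])
  also have "\<dots> = 0"
    using assms by (intro sum.neutral) (auto intro!: alternating_binomial_sum_power_eq_0)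
  finally show ?thesis .
qed

text \<open>After cancelling the factor \<open>k/2 + b + j\<close>, the Pochhammer quotient is a polynomial
  of degree \<open>N - 1\<close> in \<open>k\<close>.\<close>
lemma alternating_binomial_sum_pochhammer_eq_0:
  assumes "j < N" and "b > 0"
  shows "(\<Sum>k\<le>N. real (N choose k) * (-1)^(N - k) *
            (pochhammer (real k / 2 + b) N / (real k / 2 + b + real j))) = 0"
proof -
  define p :: "real poly" where "p = (\<Prod>i\<in>{0..<N} - {j}. [:b + real i, 1/2:])"
  have "degree p \<le> sum (degree \<circ> (\<lambda>i. [:b + real i, 1/2:])) ({0..<N} - {j})"
    unfolding p_def by (rule degree_prod_sum_le) simp
  also have "\<dots> = N - 1"
    using assms(1) by simp
  finally have "degree p < N"
    using assms(1) by simp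
  moreover have "pochhammer (real k / 2 + b) N / (real k / 2 + b + real j) = poly p (real k)" for k
  proof -
    have "pochhammer (real k / 2 + b) N = (\<Prod>i\<in>{0..<N}. real k / 2 + b + real i)"
      by (simp add: pochhammer_prod)
    also have "\<dots> = (real k / 2 + b + real j) * (\<Prod>i\<in>{0..<N} - {j}. real k / 2 + b + real i)"
      using assms(1) by (subst prod.remove[of _ j]) auto
    also have "(\<Prod>i\<in>{0..<N} - {j}. real k / 2 + b + real i) = poly p (real k)"
      unfolding p_def poly_prod by (intro prod.cong) (auto simp: algebra_simps)
    finally show ?thesis
      using assms(2) by (simp add: add_pos_nonneg)
  qed
  ultimately show ?thesis
    using alternating_binomial_sum_poly_eq_0 by simp
qed

text \<open>Every root \<open>s\<close> of \<open>R\<close> in \<open>(0,1)\<close> is matched by a factor \<open>t\<^sup>2 - s\<^sup>2\<close> of \<open>H(t\<^sup>2)\<close>;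
  since \<open>(t - s)(t\<^sup>2 - s\<^sup>2) = (t - s)\<^sup>2 (t + s)\<close>, the product has no sign change on \<open>(0,1)\<close>.\<close>
lemma exists_even_multiplier_nonneg:
  fixes R :: "real poly"
  assumes "R \<noteq> 0"
  shows "\<exists>H. H \<noteq> 0 \<and> degree H \<le> degree R \<and> (\<forall>t\<in>{0<..<1}. 0 \<le> poly R t * poly H (t^2))"
  using assms
proof (induction "degree R" arbitrary: R rule: less_induct)
  case less
  show ?case
  proof (cases "\<exists>s\<in>{0<..<1}. poly R s = 0")
    case True
    then obtain s where s: "0 < s" "s < 1" "poly R s = 0"
      by auto
    then obtain R1 where R1: "R = [:-s, 1:] * R1"
      using poly_eq_0_iff_dvd by (metis dvdE)
    have "R1 \<noteq> 0"
      using less.prems R1 by auto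
    then have "degree R = degree R1 + 1"
      unfolding R1 by (subst degree_mult_eq) auto
    then obtain H1 where H1: "H1 \<noteq> 0" "degree H1 \<le> degree R1"
      "\<forall>t\<in>{0<..<1}. 0 \<le> poly R1 t * poly H1 (t^2)"
      using less.hyps[of R1] \<open>R1 \<noteq> 0\<close> by auto
    define H where "H = [:-(s^2), 1:] * H1"
    have "H \<noteq> 0"
      using H1(1) unfolding H_def by (intro no_zero_divisors) auto
    moreover have "degree H \<le> degree R"
      unfolding H_def using H1 \<open>degree R = degree R1 + 1\<close> by (subst degree_mult_eq) auto
    moreover have "0 \<le> poly R t * poly H (t^2)" if t: "t \<in> {0<..<1}" for t
    proof -
      have "poly R t * poly H (t^2) = ((t - s)^2 * (t + s)) * (poly R1 t * poly H1 (t^2))"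
        by (simp add: R1 H_def algebra_simps power2_eq_square)
      also have "\<dots> \<ge> 0"
        using H1(3) t s by (intro mult_nonneg_nonneg[of "(t - s)^2 * (t + s)"]) auto
      finally show ?thesis .
    qed
    ultimately show ?thesis
      by blast
  next
    case False
    define c :: real where "c = (if poly R (1/2) \<ge> 0 then 1 else -1)"
    have "0 \<le> poly R t * poly [:c:] (t^2)" if t: "t \<in> {0<..<1}" for t
    proof (rule ccontr)
      assume "\<not> ?thesis"
      then have "poly R t * poly R (1/2) < 0"
        using False by (auto simp: c_def mult_less_0_iff split: if_splits)
      then have "poly R (min t (1/2)) * poly R (max t (1/2)) < 0" "min t (1/2) < max t (1/2)"
        by (cases "t \<le> 1/2"; cases "t = 1/2"; auto simp: min_def max_def mult.commute)+
      then obtain x where x: "min t (1/2) < x" "x < max t (1/2)" "poly R x = 0"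
        using poly_IVT by blast
      have "x \<in> {0<..<1}"
        using x(1,2) t by (auto simp: min_def max_def split: if_splits)
      then show False
        using False x(3) by blast
    qed
    then show ?thesis
      by (intro exI[of _ "[:c:]"]) (auto simp: c_def)
  qed
qed

lemma poly_eq_0_if_moments_eq_0:
  fixes R :: "real poly"
  assumes "degree R < d"
    and moments: "\<And>j. j < d \<Longrightarrow> integral {0..1} (\<lambda>t. poly R t * t ^ (m + 2*j)) = 0"
  shows "R = 0"
proof (rule ccontr)
  assume "R \<noteq> 0"
  then obtain H where H: "H \<noteq> 0" "degree H \<le> degree R"
      "\<forall>t\<in>{0<..<1}. 0 \<le> poly R t * poly H (t^2)"
    using exists_even_multiplier_nonneg by blast
  define F where "F = R * pcompose H [:0, 0, 1:] * monom 1 m"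
  have F_expand: "poly F t = (\<Sum>i\<le>degree H. coeff H i * (poly R t * t ^ (m + 2*i)))" for t
    by (simp add: F_def poly_pcompose poly_monom poly_altdef[of H] sum_distrib_left
        sum_distrib_right power_add power_mult mult_ac power_mult_distrib power2_eq_square)
  have F_factor: "poly F t = t^m * (poly R t * poly H (t^2))" for t
    by (simp add: F_def poly_pcompose poly_monom power2_eq_square mult_ac)
  have "integral {0..1} (poly F) =
      (\<Sum>i\<le>degree H. coeff H i * integral {0..1} (\<lambda>t. poly R t * t ^ (m + 2*i)))"
    unfolding F_expand by (subst integral_sum) (auto intro!: integrable_continuous_real continuous_intros)
  also have "\<dots> = 0"
    using H(2) assms(1) by (intro sum.neutral) (auto simp: moments)
  finally have "integral {0..1} (poly F) = 0" .
  moreover have continuous_F: "continuous_on {0..1} (poly F)"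
    by (intro continuous_intros)
  ultimately have "(poly F has_integral 0) (cbox 0 1)"
    by (metis has_integral_integral integrable_continuous_real cbox_interval)
  then have "poly F x = 0" if "x \<in> {0..1}" for x
    using that H(3) by (intro has_integral_0_cbox_imp_0[of 0 1 "poly F" x])
      (use continuous_F F_factor in auto)
  then have "{0..1::real} \<subseteq> {x. poly F x = 0}"
    by blast
  then have "infinite {x. poly F x = 0}"
    by (rule infinite_super) (simp add: infinite_Icc)
  then have "F = 0"
    using poly_roots_finite by blast
  moreover have "pcompose H [:0, 0, 1:] \<noteq> 0"
    using H(1) by (simp add: pcompose_eq_0_iff)
  ultimately show False
    using \<open>R \<noteq> 0\<close> by (simp add: F_def)
qed

text \<open>The difference vanishes at \<open>0\<close>, so it is \<open>t\<close> times a polynomial of degree \<open>< d\<close>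
  whose moments against \<open>t ^ (m + 1 + 2j)\<close> vanish.\<close>
lemma poly_eq_smult_if_moments_eq_0:
  fixes P Q :: "real poly"
  assumes "degree P \<le> d" and "degree Q \<le> d" and "poly Q 0 \<noteq> 0"
    and P_moments: "\<And>j. j < d \<Longrightarrow> integral {0..1} (\<lambda>t. poly P t * t ^ (m + 2*j)) = 0"
    and Q_moments: "\<And>j. j < d \<Longrightarrow> integral {0..1} (\<lambda>t. poly Q t * t ^ (m + 2*j)) = 0"
  shows "P = smult (poly P 0 / poly Q 0) Q"
proof -
  define c where "c = poly P 0 / poly Q 0"
  have "poly (P - smult c Q) 0 = 0"
    using assms(3) by (simp add: c_def)
  then obtain R where R: "P - smult c Q = [:0, 1:] * R"
    using poly_eq_0_iff_dvd[of "P - smult c Q" 0] by (auto elim: dvdE)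
  have "degree (P - smult c Q) \<le> d"
    using assms(1,2) degree_diff_le degree_smult_le by (metis le_trans)
  then have degree_R: "degree R < d" if "R \<noteq> 0"
    unfolding R using that by (subst (asm) degree_mult_eq) auto
  have poly_P: "poly P t = t * poly R t + c * poly Q t" for t
    using arg_cong[OF R, of "\<lambda>p. poly p t"] by simp
  have moments_R: "integral {0..1} (\<lambda>t. poly R t * t ^ (Suc m + 2*j)) = 0" if "j < d" for j
  proof -
    have "integral {0..1} (\<lambda>t. poly R t * t ^ (Suc m + 2*j)) =
        integral {0..1} (\<lambda>t. poly P t * t ^ (m + 2*j) - c * (poly Q t * t ^ (m + 2*j)))"
      by (simp add: poly_P algebra_simps)
    also have "\<dots> = integral {0..1} (\<lambda>t. poly P t * t ^ (m + 2*j))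
        - c * integral {0..1} (\<lambda>t. poly Q t * t ^ (m + 2*j))"
      by (subst integral_diff) (auto intro!: integrable_continuous_real continuous_intros)
    also have "\<dots> = 0"
      using P_moments Q_moments that by simp
    finally show ?thesis .
  qed
  have "R = 0"
    using poly_eq_0_if_moments_eq_0[OF degree_R moments_R] by blast
  then show ?thesis
    using R by (simp add: c_def)
qed

lemma has_integral_power_unit_interval:
  "((\<lambda>x::real. x ^ k) has_integral 1 / (real k + 1)) {0..1}"
proof -
  have "((\<lambda>x::real. x ^ k) has_integral (1 ^ Suc k / real (Suc k) - 0 ^ Suc k / real (Suc k))) {0..1}"
  proof (rule fundamental_theorem_of_calculus)
    fix x :: real
    have "((\<lambda>x. x ^ Suc k / real (Suc k)) has_real_derivative x ^ k) (at x within {0..1})"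
      by (intro derivative_eq_intros) auto
    then show "((\<lambda>x. x ^ Suc k / real (Suc k)) has_vector_derivative x ^ k) (at x within {0..1})"
      by (simp add: has_real_derivative_iff_has_vector_derivative)
  qed simp
  then show ?thesis
    by (simp add: add.commute)
qed

lemma integral_sum_monomials_times_power:
  fixes a :: "nat \<Rightarrow> real"
  shows "integral {0..1} (\<lambda>t. (\<Sum>k\<le>N. a k * t ^ k) * t ^ m) = (\<Sum>k\<le>N. a k / (real k + real m + 1))"
proof -
  have "((\<lambda>t. \<Sum>k\<le>N. a k * t ^ (k + m)) has_integral (\<Sum>k\<le>N. a k * (1 / (real (k + m) + 1)))) {0..1}"
    by (intro has_integral_sum has_integral_mult_right has_integral_power_unit_interval) auto
  then show ?thesis
    by (simp add: integral_unique sum_distrib_right power_add mult.assoc)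
qed

definition alpert_poly :: "nat \<Rightarrow> nat \<Rightarrow> real poly" where
  "alpert_poly d e =
     (\<Sum>k\<le>d. monom (real (d choose k) * gbinom d ((real k + real e - 1) / 2) * (-1) ^ (d - k)) k)"

lemma poly_alpert_poly:
  "poly (alpert_poly d e) x =
     (\<Sum>k\<le>d. real (d choose k) * gbinom d ((real k + real e - 1) / 2) * (-1) ^ (d - k) * x ^ k)"
  by (simp add: alpert_poly_def poly_sum poly_monom)

lemma poly_alpert_poly_1: "poly (alpert_poly d 1) = pA d"
  by (auto simp: poly_alpert_poly pA_def atLeast0AtMost)

lemma poly_alpert_poly_0: "poly (alpert_poly d 0) = qA d"
  by (auto simp: poly_alpert_poly qA_def atLeast0AtMost)

lemma degree_alpert_poly: "degree (alpert_poly d e) \<le> d"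
  unfolding alpert_poly_def by (intro degree_sum_le) (auto intro: order.trans[OF degree_monom_le])

lemma poly_alpert_poly_0_neq_0: "poly (alpert_poly d e) 0 \<noteq> 0"
proof -
  have "poly (alpert_poly d e) 0 = gbinom d ((real e - 1) / 2) * (-1) ^ d"
    by (simp add: poly_alpert_poly zero_power sum.atMost_shift)
  moreover have "pochhammer ((real e - 1) / 2 + 1) d > 0"
    by (intro pochhammer_pos) (simp add: field_simps)
  ultimately show ?thesis
    by (simp add: gbinom_def)
qed

lemma alpert_poly_moments_eq_0:
  assumes "j < d"
  shows "integral {0..1} (\<lambda>t. poly (alpert_poly d e) t * t ^ (e + 2*j)) = 0"
proof -
  define b where "b = (real e + 1) / 2"
  have "integral {0..1} (\<lambda>t. poly (alpert_poly d e) t * t ^ (e + 2*j)) =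
     (\<Sum>k\<le>d. real (d choose k) * gbinom d ((real k + real e - 1) / 2) * (-1) ^ (d - k)
        / (real k + real (e + 2*j) + 1))"
    unfolding poly_alpert_poly by (rule integral_sum_monomials_times_power)
  also have "\<dots> = 1 / (2 * fact d) * (\<Sum>k\<le>d. real (d choose k) * (-1)^(d - k) *
            (pochhammer (real k / 2 + b) d / (real k / 2 + b + real j)))"
    unfolding sum_distrib_left
  proof (intro sum.cong refl)
    fix k
    have "(real k + real e - 1) / 2 + 1 = real k / 2 + b"
      by (simp add: b_def field_simps)
    then have gbinom_eq: "gbinom d ((real k + real e - 1) / 2) = pochhammer (real k / 2 + b) d / fact d"
      unfolding gbinom_def by simp
    define y where "y = real k / 2 + b + real j"
    have denominator_eq: "real k + real (e + 2*j) + 1 = 2 * y"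
      by (simp add: y_def b_def field_simps)
    have "y > 0"
      unfolding y_def b_def by (simp add: field_simps)
    then show "real (d choose k) * gbinom d ((real k + real e - 1) / 2) * (-1) ^ (d - k)
        / (real k + real (e + 2*j) + 1) =
       1 / (2 * fact d) * (real (d choose k) * (-1)^(d - k) *
         (pochhammer (real k / 2 + b) d / (real k / 2 + b + real j)))"
      unfolding gbinom_eq denominator_eq y_def[symmetric] by (simp add: divide_simps)
  qed
  also have "\<dots> = 0"
    using alternating_binomial_sum_pochhammer_eq_0[OF assms, of b] by (simp add: b_def)
  finally show ?thesis .
qed

lemma integral_even_eq_twice_integral_unit:
  fixes h \<phi> :: "real \<Rightarrow> real"
  assumes even: "\<forall>t\<in>{0<..<1}. h (-t) = h t" and agree: "\<forall>t\<in>{0<..<1}. h t = \<phi> t"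
    and "continuous_on {0..1} \<phi>"
  shows "integral {-1..1} h = 2 * integral {0..1} \<phi>"
proof -
  define I where "I = integral {0..1} \<phi>"
  have \<phi>_integral: "(\<phi> has_integral I) {0..1}"
    unfolding I_def using assms(3) by (intro integrable_integral integrable_continuous_real)
  have right: "(h has_integral I) {0..1}"
    by (rule has_integral_spike_finite[of "{0,1}" _ _ \<phi>]) (use agree \<phi>_integral in auto)
  have reflected: "h t = \<phi> (-t)" if "t \<in> {-1..0} - {-1,0}" for t
  proof -
    have "-t \<in> {0<..<1}"
      using that by auto
    then have "h (- (- t)) = h (-t)" and "h (-t) = \<phi> (-t)"
      using even agree by blast+
    then show ?thesis
      by simp
  qed
  have "((\<lambda>t. \<phi> (-t)) has_integral I) {-1..-0}"
    using \<phi>_integral by (simp only: has_integral_reflect_real)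
  then have left: "(h has_integral I) {-1..0}"
    unfolding minus_zero
    by (rule has_integral_spike_finite[of "{-1,0}" _ _ "\<lambda>t. \<phi> (-t)", rotated 2]) (use reflected in auto)
  have "(h has_integral (I + I)) {-1..1}"
    by (rule has_integral_combine[OF _ _ left right]) auto
  then show ?thesis
    unfolding I_def by (simp add: integral_unique)
qed

lemma parity_poly_function_eq_alpert_poly:
  fixes g :: "real \<Rightarrow> real" and P :: "real poly"
  assumes "degree P \<le> d" and g_poly: "\<forall>t\<in>{0<..<1}. g t = poly P t"
    and parity: "\<forall>t\<in>{0<..<1}. g (-t) = (-1) ^ e * g t"
    and moments: "\<And>j. j < d \<Longrightarrow> integral {-1..1} (\<lambda>t. g t * t ^ (e + 2*j)) = 0"
    and norm: "integral {-1..1} (\<lambda>t. g t * g t) = 1"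
  shows "\<exists>c. c \<noteq> 0 \<and> 1 / c^2 = 2 * integral {0..1} (\<lambda>x. (poly (alpert_poly d e) x)^2) \<and>
           (\<forall>x\<in>{0<..<1}. g x = c * poly (alpert_poly d e) x)"
proof -
  have sign_square: "(-1::real) ^ e * (-1) ^ e = 1"
    by (simp flip: power_add)
  have P_moments: "integral {0..1} (\<lambda>t. poly P t * t ^ (e + 2*j)) = 0" if "j < d" for j
  proof -
    have "g (-t) * (-t) ^ (e + 2*j) = g t * t ^ (e + 2*j)" if "t \<in> {0<..<1}" for t
    proof -
      have "g (-t) * (-t) ^ (e + 2*j) = ((-1) ^ e * (-1) ^ e) * (g t * t ^ (e + 2*j))"
        using parity that by (simp add: power_add power_minus[of t e] mult_ac)
      then show ?thesis
        by (simp add: sign_square)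
    qed
    then have "integral {-1..1} (\<lambda>t. g t * t ^ (e + 2*j)) = 2 * integral {0..1} (\<lambda>t. poly P t * t ^ (e + 2*j))"
      using g_poly by (intro integral_even_eq_twice_integral_unit) (auto intro!: continuous_intros)
    then show ?thesis
      using moments that by simp
  qed
  have "g (-t) * g (-t) = g t * g t" if "t \<in> {0<..<1}" for t
  proof -
    have "g (-t) * g (-t) = ((-1) ^ e * (-1) ^ e) * (g t * g t)"
      using parity that by (simp add: mult_ac)
    then show ?thesis
      by (simp add: sign_square)
  qed
  then have "integral {-1..1} (\<lambda>t. g t * g t) = 2 * integral {0..1} (\<lambda>t. poly P t * poly P t)"
    using g_poly by (intro integral_even_eq_twice_integral_unit) (auto intro!: continuous_intros)
  then have P_norm: "2 * integral {0..1} (\<lambda>t. poly P t * poly P t) = 1"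
    using norm by simp
  define Q where "Q = alpert_poly d e"
  define c where "c = poly P 0 / poly Q 0"
  have "P = smult c Q"
    unfolding c_def Q_def using assms(1) degree_alpert_poly poly_alpert_poly_0_neq_0 P_moments
      alpert_poly_moments_eq_0 by (rule poly_eq_smult_if_moments_eq_0)
  then have c_norm: "2 * c^2 * integral {0..1} (\<lambda>x. (poly Q x)^2) = 1"
    using P_norm by (simp add: power2_eq_square mult_ac)
  then have "c \<noteq> 0"
    by auto
  moreover have "1 / c^2 = 2 * integral {0..1} (\<lambda>x. (poly Q x)^2)"
    using c_norm \<open>c \<noteq> 0\<close> by (simp add: field_simps)
  moreover have "\<forall>x\<in>{0<..<1}. g x = c * poly Q x"
    using g_poly \<open>P = smult c Q\<close> by simp
  ultimately show ?thesis
    unfolding Q_def by blast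
qed

lemma alpert_multiwavelet_eq_alpert_poly:
  assumes "alpert_multiwavelets n f" and k: "k \<in> {1..n}"
    and parity: "(-1) ^ (k + n - 1) = ((-1) ^ e :: real)"
    and moment_range: "\<And>j. j < n - 1 \<Longrightarrow> e + 2*j \<le> k + n - 2"
  shows "\<exists>c. c \<noteq> 0 \<and> 1 / c^2 = 2 * integral {0..1} (\<lambda>x. (poly (alpert_poly (n - 1) e) x)^2) \<and>
           (\<forall>x\<in>{0<..<1}. f k x = c * poly (alpert_poly (n - 1) e) x)"
proof -
  from assms(1) have poly_pieces: "\<forall>i\<in>{1..n}. \<exists>P :: real poly. degree P \<le> n - 1 \<and> (\<forall>t\<in>{0<..<1}. f i t = poly P t)"
    and parities: "\<forall>i\<in>{1..n}. \<forall>t\<in>{0<..<1}. f i (-t) = (-1) ^ (i + n - 1) * f i t"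
    and orthonormal: "\<forall>i\<in>{1..n}. \<forall>j\<in>{1..n}. integral {-1..1} (\<lambda>t. f i t * f j t) = (if i = j then 1 else 0)"
    and vanishing: "\<forall>i\<in>{1..n}. \<forall>m\<le>i + n - 2. integral {-1..1} (\<lambda>t. f i t * t ^ m) = 0"
    unfolding alpert_multiwavelets_def by blast+
  obtain P :: "real poly" where P: "degree P \<le> n - 1" "\<forall>t\<in>{0<..<1}. f k t = poly P t"
    using poly_pieces k by blast
  show ?thesis
  proof (rule parity_poly_function_eq_alpert_poly[OF P])
    show "\<forall>t\<in>{0<..<1}. f k (-t) = (-1) ^ e * f k t"
      using parities k by (simp flip: parity)
    show "integral {-1..1} (\<lambda>t. f k t * t ^ (e + 2*j)) = 0" if "j < n - 1" for j
      using vanishing k moment_range[OF that] by blast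
    show "integral {-1..1} (\<lambda>t. f k t * f k t) = 1"
      using orthonormal k by simp
  qed
qed

theorem mainTheorem4:
  fixes n :: nat and f :: "nat \<Rightarrow> real \<Rightarrow> real"
  assumes "n \<ge> 1" and "alpert_multiwavelets n f"
  shows "(\<exists>c :: real. c \<noteq> 0 \<and> 1 / c ^ 2 = 2 * integral {0..1} (\<lambda>x. (pA (n - 1) x) ^ 2) \<and>
            (\<forall>x\<in>{0<..<1}. f n x = c * pA (n - 1) x)) \<and>
         (n \<ge> 2 \<longrightarrow> (\<exists>d :: real. d \<noteq> 0 \<and> 1 / d ^ 2 = 2 * integral {0..1} (\<lambda>x. (qA (n - 1) x) ^ 2) \<and>
            (\<forall>x\<in>{0<..<1}. f (n - 1) x = d * qA (n - 1) x)))"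
proof (intro conjI impI)
  have "\<exists>c. c \<noteq> 0 \<and> 1 / c^2 = 2 * integral {0..1} (\<lambda>x. (poly (alpert_poly (n - 1) 1) x)^2) \<and>
           (\<forall>x\<in>{0<..<1}. f n x = c * poly (alpert_poly (n - 1) 1) x)"
    using assms by (intro alpert_multiwavelet_eq_alpert_poly) (auto simp: odd_pos)
  then show "\<exists>c. c \<noteq> 0 \<and> 1 / c ^ 2 = 2 * integral {0..1} (\<lambda>x. (pA (n - 1) x) ^ 2) \<and>
            (\<forall>x\<in>{0<..<1}. f n x = c * pA (n - 1) x)"
    unfolding poly_alpert_poly_1 .
next
  assume "n \<ge> 2"
  then have "\<exists>d. d \<noteq> 0 \<and> 1 / d^2 = 2 * integral {0..1} (\<lambda>x. (poly (alpert_poly (n - 1) 0) x)^2) \<and>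
           (\<forall>x\<in>{0<..<1}. f (n - 1) x = d * poly (alpert_poly (n - 1) 0) x)"
    using assms by (intro alpert_multiwavelet_eq_alpert_poly) auto
  then show "\<exists>d. d \<noteq> 0 \<and> 1 / d ^ 2 = 2 * integral {0..1} (\<lambda>x. (qA (n - 1) x) ^ 2) \<and>
            (\<forall>x\<in>{0<..<1}. f (n - 1) x = d * qA (n - 1) x)"
    unfolding poly_alpert_poly_0 .
qed

end
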